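(* For $-2\pi<\theta<2\pi$ let $\widehat D_\theta=\inf_{(x,v)\in\Gamma_\theta}d_H((0,1),(x,v))$. Then: (1) if $0\le|\theta|<\pi$, then $\widehat D_\theta=|\theta|=d_H\big((0,1),(\frac{\theta+\sin\theta}{2},\cos^2\frac{\theta}{2})\big)$; (2) if $\pi\le|\theta|<2\pi$, then $\widehat D_\theta=\theta\big(\sin\frac{\theta}{2}\big)^{-1}=d_H\big((0,1),(\frac{\theta-\sin\theta}{1-\cos\theta},0)\big)$.
   Context: Let $\mathcal{H}=\{(x,v)\in\mathbb{R}^2:v\ge0\}$ and let $d_H$ be the Riemannian distance on $\mathcal{H}$ induced by the metric $ds^2=v^{-1}(dx^2+dv^2)$ on the open upper half-plane (extended to the boundary). For $v\ge0$ and $0<|\delta|<2\pi$ set $$f(v,\delta)=\frac{(v+1)(\delta-\sin\delta)+2\sqrt v\,(2\sin\frac{\delta}{2}-\delta\cos\frac{\delta}{2})}{2\sin^2\frac{\delta}{2}},$$ and $f(v,0)=0$. For $(x,v)\in\mathcal{H}$, $\delta(x,v)$ denotes the unique $\delta\in(-2\pi,2\pi)$ with $f(v,\delta)=x$, and $\Gamma_\theta=\{(x,v)\in\mathcal{H}:\delta(x,v)=\theta\}$. *)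

theory Defs
  imports "HOL-Analysis.Analysis"
begin

definition fH :: "real \<Rightarrow> real \<Rightarrow> real" where
  "fH v \<delta> = (if \<delta> = 0 then 0 else
     ((v + 1) * (\<delta> - sin \<delta>) + 2 * sqrt v * (2 * sin (\<delta>/2) - \<delta> * cos (\<delta>/2)))
       / (2 * (sin (\<delta>/2))^2))"

definition deltaH :: "real \<Rightarrow> real \<Rightarrow> real" where
  "deltaH x v = (THE \<delta>. -2*pi < \<delta> \<and> \<delta> < 2*pi \<and> fH v \<delta> = x)"

definition GammaH :: "real \<Rightarrow> (real \<times> real) set" where
  "GammaH \<theta> = {(x, v). v \<ge> 0 \<and> deltaH x v = \<theta>}"

text \<open>Length of admissible curves for the metric v^{-1}(dx^2+dv^2): piecewise C1 curves on [0,1]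
  whose interior lies in the open upper half-plane (endpoints may lie on the boundary v = 0).\<close>
definition hyp_dist :: "real \<times> real \<Rightarrow> real \<times> real \<Rightarrow> real" where
  "hyp_dist p q = Inf {L. \<exists>\<gamma>::real \<Rightarrow> real \<times> real.
      \<gamma> piecewise_C1_differentiable_on {0..1} \<and> \<gamma> 0 = p \<and> \<gamma> 1 = q \<and>
      (\<forall>t\<in>{0<..<1}. snd (\<gamma> t) > 0) \<and>
      ((\<lambda>t. norm (vector_derivative \<gamma> (at t)) / sqrt (snd (\<gamma> t))) has_integral L) {0..1}}"

definition Dhat :: "real \<Rightarrow> real" where
  "Dhat \<theta> = Inf ((\<lambda>p. hyp_dist (0, 1) p) ` GammaH \<theta>)"

end

theory Submission
  imports Defs "HOL-Real_Asymp.Real_Asymp"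
begin

text \<open>
  The proof is a calibration argument. Put \<open>G(x,v) = h(\<delta>) |\<surd>v - exp(i\<delta>/2)|\<close> with
  \<open>\<delta> = \<delta>(x,v)\<close> and \<open>h(\<delta>) = \<delta> / sin(\<delta>/2)\<close>. Then \<open>G(0,1) = 0\<close> and, away from \<open>(0,1)\<close>,
  \<open>G\<close> satisfies the eikonal equation \<open>v |\<nabla>G|\<^sup>2 = 1\<close>; by Cauchy-Schwarz the derivative of
  \<open>G\<close> along an admissible curve is bounded by its hyperbolic speed, so \<open>G \<le> d\<^sub>H((0,1), \<cdot>)\<close>.
  On \<open>\<Gamma>\<^sub>\<theta>\<close> the chord \<open>|\<surd>v - exp(i\<theta>/2)|\<close> is at least \<open>|sin(\<theta>/2)|\<close>, and at least \<open>1\<close>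
  when \<open>cos(\<theta>/2) \<le> 0\<close>, i.e. \<open>|\<theta>| \<ge> \<pi>\<close>; this gives the lower bounds \<open>|\<theta>|\<close> and
  \<open>\<theta> / sin(\<theta>/2)\<close>. Explicit constant-speed curves from \<open>(0,1)\<close> to the two points of the
  statement attain them.
\<close>

section \<open>The function \<open>f\<close> and the angle \<open>\<delta>\<close>\<close>

definition fP :: "real \<Rightarrow> real" where
  "fP d = (if d = 0 then 0 else (d - 2 * sin (d/2) * cos (d/2)) / (2 * (sin (d/2))^2))"

definition fQ :: "real \<Rightarrow> real" where
  "fQ d = (if d = 0 then 0 else (2 * sin (d/2) - d * cos (d/2)) / (2 * (sin (d/2))^2))"

definition fP' :: "real \<Rightarrow> real" where
  "fP' d = (if d = 0 then 1/3 else (2 * sin (d/2) - d * cos (d/2)) / (2 * (sin (d/2))^3))"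

definition fQ' :: "real \<Rightarrow> real" where
  "fQ' d = (if d = 0 then 1/6 else
     (d * (1 + (cos (d/2))^2) - 4 * sin (d/2) * cos (d/2)) / (4 * (sin (d/2))^3))"

definition theta_over_sin :: "real \<Rightarrow> real" where
  "theta_over_sin d = (if d = 0 then 2 else d / sin (d/2))"

lemma sin_eq_double_half: "sin (d::real) = 2 * sin (d/2) * cos (d/2)"
  using sin_double[of "d/2"] by simp

lemma cos_eq_double_half: "cos (d::real) = 1 - 2 * (sin (d/2))^2"
  using cos_double_sin[of "d/2"] by simp

lemma sin_half_neq_0:
  assumes "-2*pi < d" "d < 2*pi" "d \<noteq> 0"
  shows "sin (d/2) \<noteq> 0"
proof
  assume "sin (d/2) = 0"
  then have "d/2 = 0" using sin_eq_0_pi[of "d/2"] assms by auto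
  with assms show False by simp
qed

lemma fH_eq_fP_fQ: "fH v d = (v + 1) * fP d + 2 * sqrt v * fQ d"
  unfolding fH_def fP_def fQ_def sin_eq_double_half[of d]
  by (cases "sin (d/2) = 0") (simp_all add: field_simps)

lemma fH_odd: "fH v (-d) = - fH v d"
proof (cases "d = 0")
  case False
  define N where "N = (v + 1) * (d - sin d) + 2 * sqrt v * (2 * sin (d/2) - d * cos (d/2))"
  have "fH v d = N / (2 * (sin (d/2))^2)" "fH v (-d) = - N / (2 * (sin (d/2))^2)"
    unfolding fH_def N_def using False by (simp_all add: algebra_simps)
  then show ?thesis by simp
qed (simp add: fH_def)

lemma fP_has_real_derivative:
  assumes "-2*pi < d" "d < 2*pi"
  shows "(fP has_real_derivative fP' d) (at d)"
proof (cases "d = 0")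
  case True
  have "((\<lambda>y::real. ((y - 2 * sin (y/2) * cos (y/2)) / (2 * (sin (y/2))^2)) / y) \<longlongrightarrow> 1/3) (at 0)"
    by (real_asymp simp: field_simps)
  then have "((\<lambda>y. (fP y - fP 0) / (y - 0)) \<longlongrightarrow> 1/3) (at 0)"
    by (rule Lim_transform_eventually) (auto simp: fP_def eventually_at_filter)
  then show ?thesis using True by (simp add: has_field_derivative_iff fP'_def)
next
  case False
  have s: "sin (d/2) \<noteq> 0" using sin_half_neq_0 assms False by blast
  have "((\<lambda>d. (d - 2 * sin (d/2) * cos (d/2)) / (2 * (sin (d/2))^2)) has_real_derivative fP' d) (at d)"
    apply (rule derivative_eq_intros refl | simp add: s)+
    using s False unfolding fP'_def
    apply (simp add: field_simps power2_eq_square power3_eq_cube)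
    using sin_cos_squared_add[of "d/2"] by algebra
  then show ?thesis
    by (rule has_field_derivative_transform_within_open[where S="-{0}"]) (auto simp: False fP_def)
qed

lemma fQ_has_real_derivative:
  assumes "-2*pi < d" "d < 2*pi"
  shows "(fQ has_real_derivative fQ' d) (at d)"
proof (cases "d = 0")
  case True
  have "((\<lambda>y::real. ((2 * sin (y/2) - y * cos (y/2)) / (2 * (sin (y/2))^2)) / y) \<longlongrightarrow> 1/6) (at 0)"
    by (real_asymp simp: field_simps)
  then have "((\<lambda>y. (fQ y - fQ 0) / (y - 0)) \<longlongrightarrow> 1/6) (at 0)"
    by (rule Lim_transform_eventually) (auto simp: fQ_def eventually_at_filter)
  then show ?thesis using True by (simp add: has_field_derivative_iff fQ'_def)
next
  case False
  have s: "sin (d/2) \<noteq> 0" using sin_half_neq_0 assms False by blast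
  have "((\<lambda>d. (2 * sin (d/2) - d * cos (d/2)) / (2 * (sin (d/2))^2)) has_real_derivative fQ' d) (at d)"
    apply (rule derivative_eq_intros refl | simp add: s)+
    using s False unfolding fQ'_def
    apply (simp add: field_simps power2_eq_square power3_eq_cube)
    using sin_cos_squared_add[of "d/2"] by algebra
  then show ?thesis
    by (rule has_field_derivative_transform_within_open[where S="-{0}"]) (auto simp: False fQ_def)
qed

lemma theta_over_sin_has_real_derivative:
  assumes "-2*pi < d" "d < 2*pi"
  shows "(theta_over_sin has_real_derivative fQ d) (at d)"
proof (cases "d = 0")
  case True
  have "((\<lambda>y::real. (y / sin (y/2) - 2) / y) \<longlongrightarrow> 0) (at 0)"
    by (real_asymp simp: field_simps)
  then have "((\<lambda>y. (theta_over_sin y - theta_over_sin 0) / (y - 0)) \<longlongrightarrow> 0) (at 0)"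
    by (rule Lim_transform_eventually) (auto simp: theta_over_sin_def eventually_at_filter)
  then show ?thesis using True by (simp add: has_field_derivative_iff fQ_def)
next
  case False
  have s: "sin (d/2) \<noteq> 0" using sin_half_neq_0 assms False by blast
  have "((\<lambda>d. d / sin (d/2)) has_real_derivative fQ d) (at d)"
    apply (rule derivative_eq_intros refl | simp add: s)+
    using s False unfolding fQ_def by (simp add: field_simps power2_eq_square)
  then show ?thesis
    by (rule has_field_derivative_transform_within_open[where S="-{0}"])
       (auto simp: False theta_over_sin_def)
qed

lemma sin_minus_mult_cos_pos:
  assumes "0 < y" "y < pi"
  shows "sin y - y * cos y > 0"
proof -
  have "(\<lambda>t. sin t - t * cos t) 0 < (\<lambda>t. sin t - t * cos t) y"
  proof (rule DERIV_pos_imp_increasing_open[OF assms(1)])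
    fix x assume x: "0 < x" "x < y"
    have "((\<lambda>t. sin t - t * cos t) has_real_derivative x * sin x) (at x)"
      by (rule derivative_eq_intros refl | simp)+
    moreover have "x * sin x > 0" using x assms by (simp add: sin_gt_zero)
    ultimately show "\<exists>z. ((\<lambda>t. sin t - t * cos t) has_real_derivative z) (at x) \<and> 0 < z"
      by blast
  qed (intro continuous_intros)
  then show ?thesis by simp
qed

lemma theta_over_sin_pos:
  assumes "-2*pi < d" "d < 2*pi"
  shows "theta_over_sin d > 0"
proof (cases "d = 0")
  case False
  have "d / sin (d/2) > 0"
  proof (cases "d > 0")
    case True
    then show ?thesis using assms by (simp add: sin_gt_zero)
  next
    case False
    have "sin (- d/2) > 0" using \<open>d \<noteq> 0\<close> False assms by (intro sin_gt_zero) auto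
    then show ?thesis using \<open>d \<noteq> 0\<close> False divide_neg_neg[of d "sin (d/2)"] by simp
  qed
  then show ?thesis using False by (simp add: theta_over_sin_def)
qed (simp add: theta_over_sin_def)

lemma fP'_pos:
  assumes "-2*pi < d" "d < 2*pi"
  shows "fP' d > 0"
proof (cases "d = 0")
  case False
  have pos: "(2 * sin (e/2) - e * cos (e/2)) / (sin (e/2))^3 > 0" if "0 < e" "e < 2*pi" for e
  proof -
    have "sin (e/2) > 0" using that by (intro sin_gt_zero) auto
    moreover have "sin (e/2) - (e/2) * cos (e/2) > 0"
      by (rule sin_minus_mult_cos_pos) (use that in auto)
    moreover have "2 * sin (e/2) - e * cos (e/2) = 2 * (sin (e/2) - (e/2) * cos (e/2))"
      by (simp add: algebra_simps)
    ultimately show ?thesis by simp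
  qed
  have even: "(2 * sin (-d/2) - (-d) * cos (-d/2)) / (sin (-d/2))^3
      = (2 * sin (d/2) - d * cos (d/2)) / (sin (d/2))^3"
  proof -
    have "2 * sin (-d/2) - (-d) * cos (-d/2) = - (2 * sin (d/2) - d * cos (d/2))" by simp
    moreover have "(sin (-d/2))^3 = - ((sin (d/2))^3)" by simp
    ultimately show ?thesis by (simp only: minus_divide_divide)
  qed
  have "(2 * sin (d/2) - d * cos (d/2)) / (sin (d/2))^3 > 0"
    using pos[of d] pos[of "-d"] False assms unfolding even by (cases "d > 0") auto
  moreover have "fP' d = (2 * sin (d/2) - d * cos (d/2)) / (sin (d/2))^3 / 2"
    using False by (simp add: fP'_def field_simps)
  ultimately show ?thesis by (metis half_gt_zero)
qed (simp add: fP'_def)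

lemma fP'_add_fQ'_pos:
  assumes "-2*pi < d" "d < 2*pi"
  shows "fP' d + fQ' d > 0"
proof (cases "d = 0")
  case False
  define s c where "s = sin (d/2)" and "c = cos (d/2)"
  have s: "s \<noteq> 0" unfolding s_def using sin_half_neq_0 assms False by blast
  have "s^2 + c^2 = 1" "s^2 > 0" using s unfolding s_def c_def by simp_all
  then have "c^2 < 1" by linarith
  then have c: "1 - c > 0" by (simp add: abs_square_less_1 abs_less_iff)
  have "d / s > 0" using theta_over_sin_pos[OF assms] False by (simp add: theta_over_sin_def s_def)
  have "d / s^3 = (d / s) / s^2" by (simp add: power2_eq_square power3_eq_cube)
  also have "\<dots> > 0" by (rule divide_pos_pos[OF \<open>d / s > 0\<close>]) (use s in simp)
  finally have "d / s^3 > 0" .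
  then have "(1 - c) * (d / s^3) \<ge> 0" using c by (intro mult_nonneg_nonneg) auto
  then have "(1 - c) * (4 / s^2 + (1 - c) * (d / s^3)) > 0"
    using c s by (intro mult_pos_pos add_pos_nonneg) auto
  moreover have "fP' d + fQ' d = (1 - c) * (4 / s^2 + (1 - c) * (d / s^3)) / 4"
    using False s unfolding fP'_def fQ'_def s_def[symmetric] c_def[symmetric]
    by (simp add: field_simps power2_eq_square power3_eq_cube)
  ultimately show ?thesis by simp
qed (simp add: fP'_def fQ'_def)

definition fH_ddelta :: "real \<Rightarrow> real \<Rightarrow> real" where
  "fH_ddelta v d = (v + 1) * fP' d + 2 * sqrt v * fQ' d"

lemma fH_has_real_derivative:
  assumes "-2*pi < d" "d < 2*pi"
  shows "(fH v has_real_derivative fH_ddelta v d) (at d)"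
  unfolding fH_eq_fP_fQ[abs_def] fH_ddelta_def
  by (rule derivative_eq_intros fP_has_real_derivative fQ_has_real_derivative assms refl | simp)+

lemma fH_ddelta_pos:
  assumes "v \<ge> 0" "-2*pi < d" "d < 2*pi"
  shows "fH_ddelta v d > 0"
proof -
  have "fH_ddelta v d = fP' d * (sqrt v - 1)^2 + 2 * sqrt v * (fP' d + fQ' d)"
    using assms(1) unfolding fH_ddelta_def by (simp add: power2_eq_square algebra_simps)
  moreover have "fP' d > 0" "fP' d + fQ' d > 0"
    using fP'_pos fP'_add_fQ'_pos assms(2,3) by blast+
  moreover have "0 < fP' d * (sqrt v - 1)^2 \<or> 0 < 2 * sqrt v * (fP' d + fQ' d)"
    using calculation(2,3) assms(1) by (cases "v = 0") auto
  moreover have "0 \<le> fP' d * (sqrt v - 1)^2" "0 \<le> 2 * sqrt v * (fP' d + fQ' d)"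
    using calculation(2,3) assms(1) by simp_all
  ultimately show ?thesis by linarith
qed

lemma fH_strict_mono:
  assumes "v \<ge> 0" "-2*pi < a" "a < b" "b < 2*pi"
  shows "fH v a < fH v b"
proof (rule DERIV_pos_imp_increasing[OF assms(3)])
  fix x assume "a \<le> x" "x \<le> b"
  then show "\<exists>y. (fH v has_real_derivative y) (at x) \<and> 0 < y"
    using assms by (intro exI[of _ "fH_ddelta v x"] conjI fH_has_real_derivative fH_ddelta_pos) auto
qed

lemma fH_less_iff:
  assumes "v \<ge> 0" "-2*pi < a" "a < 2*pi" "-2*pi < b" "b < 2*pi"
  shows "fH v a < fH v b \<longleftrightarrow> a < b"
  using fH_strict_mono[of v a b] fH_strict_mono[of v b a] assms
  by (cases a b rule: linorder_cases) auto

lemma continuous_on_fH: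
  assumes "-2*pi < a" "b < 2*pi"
  shows "continuous_on {a..b} (fH v)"
  using assms
  by (intro continuous_at_imp_continuous_on ballI DERIV_isCont[OF fH_has_real_derivative]) auto

lemma fH_ge_near_2pi:
  assumes "v \<ge> 0" "0 < e" "e \<le> 1"
  shows "2 * pi / e^2 \<le> fH v (2*pi - e)"
proof -
  define b where "b = 2*pi - e"
  define N where "N = (v + 1) * (b - sin b) + 2 * sqrt v * (2 * sin (b/2) - b * cos (b/2))"
  have b: "pi < b" using assms pi_gt3 unfolding b_def by simp
  have half_b: "b/2 = pi - e/2" unfolding b_def by simp
  have sin_b: "sin (b/2) = sin (e/2)" and cos_b: "cos (b/2) = - cos (e/2)"
    unfolding half_b by simp_all
  have sin_e: "0 < sin (e/2)" "sin (e/2) \<le> e/2"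
    using assms pi_gt3 sin_x_le_x[of "e/2"] by (auto intro!: sin_gt_zero)
  have "0 \<le> cos (e/2)" "0 \<le> sin e" using assms pi_gt3 by (auto intro!: cos_ge_zero sin_ge_zero)
  have "pi \<le> b - sin b" using \<open>0 \<le> sin e\<close> b unfolding b_def by simp
  then have "1 * pi \<le> (v + 1) * (b - sin b)"
    using assms(1) pi_gt_zero by (intro mult_mono) auto
  moreover have "0 \<le> b * cos (e/2)"
    using b pi_gt_zero \<open>0 \<le> cos (e/2)\<close> by (intro mult_nonneg_nonneg) linarith+
  then have "0 \<le> 2 * sqrt v * (2 * sin (b/2) - b * cos (b/2))"
    unfolding sin_b cos_b using sin_e(1) assms(1) by simp
  ultimately have "pi \<le> N" unfolding N_def by linarith
  moreover have "0 < 2 * (sin (b/2))^2" "2 * (sin (b/2))^2 \<le> e^2/2"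
    using sin_e power_mono[of "sin (e/2)" "e/2" 2] unfolding sin_b by (auto simp: power_divide)
  ultimately have "pi / (e^2/2) \<le> N / (2 * (sin (b/2))^2)"
    using pi_gt_zero by (intro frac_le) (auto intro: order_trans[OF pi_ge_zero])
  also have "\<dots> = fH v b" unfolding fH_def N_def using b by simp
  finally show ?thesis unfolding b_def by (simp add: field_simps)
qed

lemma fH_surj:
  assumes "v \<ge> 0"
  shows "\<exists>d. -2*pi < d \<and> d < 2*pi \<and> fH v d = x"
proof -
  define e where "e = 1 / (\<bar>x\<bar> + 1)"
  define m where "m = 2*pi - e"
  have e: "0 < e" "e \<le> 1" unfolding e_def by (auto simp: field_simps)
  then have m: "0 < m" "m < 2*pi" unfolding m_def using pi_gt3 by auto
  have "\<bar>x\<bar> \<le> 1 * (\<bar>x\<bar> + 1)^2"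
    using zero_le_square[of "\<bar>x\<bar>"] by (simp add: power2_eq_square algebra_simps)
  also have "\<dots> \<le> 2 * pi * (\<bar>x\<bar> + 1)^2" by (rule mult_right_mono) (use pi_gt3 in auto)
  also have "\<dots> = 2 * pi / e^2" unfolding e_def by (simp add: field_simps)
  also have "\<dots> \<le> fH v m" unfolding m_def by (rule fH_ge_near_2pi[OF assms e])
  finally have "fH v (-m) \<le> x" "x \<le> fH v m" using fH_odd[of v m] by auto
  moreover have "continuous_on {-m..m} (fH v)" using m by (intro continuous_on_fH) auto
  ultimately obtain d where "-m \<le> d" "d \<le> m" "fH v d = x"
    using IVT'[of "fH v" "-m" x m] m by auto
  then show ?thesis using m by (intro exI[of _ d]) auto
qed

lemma fH_inj:
  assumes "v \<ge> 0" "-2*pi < a" "a < 2*pi" "-2*pi < b" "b < 2*pi" "fH v a = fH v b"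
  shows "a = b"
  using fH_less_iff[of v a b] fH_less_iff[of v b a] assms by (cases a b rule: linorder_cases) auto

lemma ex1_fH_eq:
  assumes "v \<ge> 0"
  shows "\<exists>!d. -2*pi < d \<and> d < 2*pi \<and> fH v d = x"
  using fH_surj[OF assms] fH_inj[OF assms] by blast

lemma deltaH_spec:
  assumes "v \<ge> 0"
  shows "-2*pi < deltaH x v" "deltaH x v < 2*pi" "fH v (deltaH x v) = x"
  using theI'[OF ex1_fH_eq[OF assms, of x]] unfolding deltaH_def by auto

lemma deltaH_eqI:
  assumes "v \<ge> 0" "-2*pi < d" "d < 2*pi" "fH v d = x"
  shows "deltaH x v = d"
  unfolding deltaH_def using assms ex1_fH_eq[OF assms(1)] by (intro the1_equality) auto

lemma less_deltaH_iff:
  assumes "v \<ge> 0" "-2*pi < a" "a < 2*pi"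
  shows "a < deltaH x v \<longleftrightarrow> fH v a < x"
  using fH_less_iff[OF assms deltaH_spec(1,2)[OF assms(1)]] deltaH_spec(3)[OF assms(1)] by simp

lemma deltaH_less_iff:
  assumes "v \<ge> 0" "-2*pi < a" "a < 2*pi"
  shows "deltaH x v < a \<longleftrightarrow> x < fH v a"
  using fH_less_iff[OF assms(1) deltaH_spec(1,2)[OF assms(1)] assms(2,3)] deltaH_spec(3)[OF assms(1)] by simp

section \<open>The calibration and its eikonal equation\<close>

definition delta_pt :: "real \<times> real \<Rightarrow> real" where
  "delta_pt p = deltaH (fst p) (snd p)"

lemma delta_pt_bounds:
  assumes "snd p \<ge> 0"
  shows "-2*pi < delta_pt p" "delta_pt p < 2*pi"
  using deltaH_spec[OF assms] unfolding delta_pt_def by auto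

lemma tendsto_fH_snd: "((\<lambda>p. fH (snd p) a) \<longlongrightarrow> fH (snd p0) a) (at p0 within S)"
  unfolding fH_eq_fP_fQ by (intro tendsto_intros)

lemma continuous_on_delta_pt: "continuous_on {p. snd p \<ge> 0} delta_pt"
  unfolding continuous_on_def
proof (intro ballI order_tendstoI)
  fix p0 :: "real \<times> real" and a
  let ?H = "{p::real \<times> real. snd p \<ge> 0}"
  assume "p0 \<in> ?H"
  then have v0: "snd p0 \<ge> 0" by simp
  note d0 = delta_pt_bounds[OF v0]
  have H: "eventually (\<lambda>p. snd p \<ge> 0) (at p0 within ?H)" by (simp add: eventually_at_filter)
  {
    assume "a < delta_pt p0"
    define a' where "a' = max a ((delta_pt p0 - 2*pi) / 2)"
    have a': "-2*pi < a'" "a' < delta_pt p0" "a \<le> a'"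
      using d0 \<open>a < delta_pt p0\<close> unfolding a'_def by (auto simp: less_max_iff_disj)
    have "((\<lambda>p. fst p - fH (snd p) a') \<longlongrightarrow> fst p0 - fH (snd p0) a') (at p0 within ?H)"
      by (intro tendsto_intros tendsto_fH_snd)
    moreover have "0 < fst p0 - fH (snd p0) a'"
      using less_deltaH_iff[OF v0 a'(1)] a' d0 by (simp add: delta_pt_def)
    ultimately have "eventually (\<lambda>p. 0 < fst p - fH (snd p) a') (at p0 within ?H)"
      by (rule order_tendstoD)
    with H show "eventually (\<lambda>p. a < delta_pt p) (at p0 within ?H)"
    proof eventually_elim
      case (elim p)
      then have "a' < delta_pt p"
        using less_deltaH_iff[of "snd p" a' "fst p"] a' d0 by (simp add: delta_pt_def)
      then show ?case using a' by simp
    qed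
  }
  {
    assume "delta_pt p0 < a"
    define a' where "a' = min a ((delta_pt p0 + 2*pi) / 2)"
    have a': "a' < 2*pi" "delta_pt p0 < a'" "a' \<le> a"
      using d0 \<open>delta_pt p0 < a\<close> unfolding a'_def by (auto simp: min_less_iff_disj)
    have "((\<lambda>p. fH (snd p) a' - fst p) \<longlongrightarrow> fH (snd p0) a' - fst p0) (at p0 within ?H)"
      by (intro tendsto_intros tendsto_fH_snd)
    moreover have "0 < fH (snd p0) a' - fst p0"
      using deltaH_less_iff[OF v0 _ a'(1)] a' d0 by (simp add: delta_pt_def)
    ultimately have "eventually (\<lambda>p. 0 < fH (snd p) a' - fst p) (at p0 within ?H)"
      by (rule order_tendstoD)
    with H show "eventually (\<lambda>p. delta_pt p < a) (at p0 within ?H)"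
    proof eventually_elim
      case (elim p)
      then have "delta_pt p < a'"
        using deltaH_less_iff[of "snd p" a' "fst p"] a' d0 by (simp add: delta_pt_def)
      then show ?case using a' by simp
    qed
  }
qed

definition chord_sq :: "real \<Rightarrow> real \<Rightarrow> real" where
  "chord_sq d v = 1 + v - 2 * sqrt v * cos (d/2)"

definition calibration :: "real \<times> real \<Rightarrow> real" where
  "calibration p = theta_over_sin (delta_pt p) * sqrt (chord_sq (delta_pt p) (snd p))"

lemma chord_sq_eq: "v \<ge> 0 \<Longrightarrow> chord_sq d v = (sqrt v - cos (d/2))^2 + (sin (d/2))^2"
  unfolding chord_sq_def using sin_cos_squared_add[of "d/2"]
  by (simp add: power2_eq_square algebra_simps)

lemma delta_pt_origin: "delta_pt (0, 1) = 0"
  unfolding delta_pt_def by (rule deltaH_eqI) (auto simp: fH_def)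

lemma calibration_origin: "calibration (0, 1) = 0"
  unfolding calibration_def chord_sq_def by (simp add: delta_pt_origin theta_over_sin_def)

lemma chord_sq_pos:
  assumes "snd p \<ge> 0" "p \<noteq> (0, 1)"
  shows "chord_sq (delta_pt p) (snd p) > 0"
proof (rule ccontr)
  define d where "d = delta_pt p"
  assume "\<not> ?thesis"
  then have "(sqrt (snd p) - cos (d/2))^2 + (sin (d/2))^2 \<le> 0"
    using chord_sq_eq[OF assms(1)] unfolding d_def by simp
  then have "sin (d/2) = 0" "sqrt (snd p) = cos (d/2)"
    by (simp_all add: sum_power2_le_zero_iff)
  moreover have "-2*pi < d" "d < 2*pi" using delta_pt_bounds[OF assms(1)] unfolding d_def by auto
  ultimately have "d = 0" "snd p = 1" using sin_half_neq_0 by fastforce+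
  moreover have "fH (snd p) d = fst p" using deltaH_spec(3)[OF assms(1)] unfolding d_def delta_pt_def .
  ultimately show False using assms(2) by (cases p) (simp add: fH_def)
qed

lemma continuous_on_calibration: "continuous_on {p. snd p \<ge> 0} calibration"
proof -
  have "continuous_on {p. snd p \<ge> 0} (\<lambda>p. theta_over_sin (delta_pt p))"
    using delta_pt_bounds
    by (intro continuous_on_compose2[OF _ continuous_on_delta_pt, of "{-2*pi<..<2*pi}"]
        continuous_at_imp_continuous_on ballI DERIV_isCont[OF theta_over_sin_has_real_derivative]) auto
  then show ?thesis unfolding calibration_def[abs_def] chord_sq_def
    by (intro continuous_intros continuous_on_delta_pt) auto
qed

definition fH_dv :: "real \<Rightarrow> real \<Rightarrow> real" where
  "fH_dv v d = fP d + fQ d / sqrt v"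

lemma fH_pair_has_derivative:
  assumes "v > 0" "-2*pi < d" "d < 2*pi"
  shows "((\<lambda>z. (fH (snd z) (fst z), snd z)) has_derivative
           (\<lambda>h. (fH_ddelta v d * fst h + fH_dv v d * snd h, snd h))) (at (d, v))"
proof -
  have P: "((\<lambda>z. fP (fst z)) has_derivative (\<lambda>h. fst h * fP' d)) (at (d, v))"
    by (rule DERIV_compose_FDERIV[where g=fst]) (use fP_has_real_derivative assms in \<open>auto intro: derivative_intros\<close>)
  have Q: "((\<lambda>z. fQ (fst z)) has_derivative (\<lambda>h. fst h * fQ' d)) (at (d, v))"
    by (rule DERIV_compose_FDERIV[where g=fst]) (use fQ_has_real_derivative assms in \<open>auto intro: derivative_intros\<close>)
  show ?thesis unfolding fH_eq_fP_fQ
    apply (rule has_derivative_eq_rhs)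
     apply (rule derivative_intros P Q | simp add: assms(1))+
    using assms(1) by (auto simp: fun_eq_iff fH_ddelta_def fH_dv_def field_simps)
qed

lemma delta_pt_has_derivative:
  fixes x v :: real
  assumes "v > 0"
  defines "d \<equiv> deltaH x v"
  shows "((\<lambda>p. (delta_pt p, snd p)) has_derivative
           (\<lambda>h. ((fst h - fH_dv v d * snd h) / fH_ddelta v d, snd h))) (at (x, v))"
proof -
  let ?S = "{-2*pi<..<2*pi} \<times> {0::real<..}"
  let ?f = "\<lambda>z::real \<times> real. (fH (snd z) (fst z), snd z)"
  have d: "-2*pi < d" "d < 2*pi" "fH v d = x" using deltaH_spec[of v x] assms by auto
  have "fH_ddelta v d \<noteq> 0" using fH_ddelta_pos[of v d] assms(1) d by auto
  have "((\<lambda>p. (delta_pt p, snd p)) has_derivative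
      (\<lambda>h. ((fst h - fH_dv v d * snd h) / fH_ddelta v d, snd h))) (at (?f (d, v)))"
  proof (rule has_derivative_inverse_strong[where S = ?S and x = "(d, v)"])
    show "open ?S" by (intro open_Times) auto
    show "(d, v) \<in> ?S" using d assms(1) by auto
    show "continuous_on ?S ?f"
    proof (rule continuous_at_imp_continuous_on, rule ballI)
      fix z assume "z \<in> ?S"
      then obtain a b where z: "z = (a, b)" "-2*pi < a" "a < 2*pi" "b > 0" by auto
      show "isCont ?f z"
        unfolding z(1) by (rule has_derivative_continuous[OF fH_pair_has_derivative[OF z(4,2,3)]])
    qed
    show "\<And>z. z \<in> ?S \<Longrightarrow> (delta_pt (?f z), snd (?f z)) = z"
      by (auto simp: delta_pt_def deltaH_eqI)
    show "(?f has_derivative (\<lambda>h. (fH_ddelta v d * fst h + fH_dv v d * snd h, snd h))) (at (d, v))"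
      by (rule fH_pair_has_derivative[OF assms(1) d(1,2)])
    show "(\<lambda>h. (fH_ddelta v d * fst h + fH_dv v d * snd h, snd h))
        \<circ> (\<lambda>h. ((fst h - fH_dv v d * snd h) / fH_ddelta v d, snd h)) = id"
      using \<open>fH_ddelta v d \<noteq> 0\<close> by (auto simp: fun_eq_iff field_simps)
  qed
  then show ?thesis using d by simp
qed

definition calib_ddelta :: "real \<Rightarrow> real \<Rightarrow> real" where
  "calib_ddelta d v = fQ d * sqrt (chord_sq d v)
     + theta_over_sin d * (sqrt v * sin (d/2)) / (2 * sqrt (chord_sq d v))"

definition calib_dv :: "real \<Rightarrow> real \<Rightarrow> real" where
  "calib_dv d v = theta_over_sin d * (1 - cos (d/2) / sqrt v) / (2 * sqrt (chord_sq d v))"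

lemma calib_pair_has_derivative:
  assumes "v > 0" "-2*pi < d" "d < 2*pi" "chord_sq d v > 0"
  shows "((\<lambda>z. theta_over_sin (fst z) * sqrt (chord_sq (fst z) (snd z))) has_derivative
           (\<lambda>h. calib_ddelta d v * fst h + calib_dv d v * snd h)) (at (d, v))"
proof -
  have T: "((\<lambda>z. theta_over_sin (fst z)) has_derivative (\<lambda>h. fst h * fQ d)) (at (d, v))"
    by (rule DERIV_compose_FDERIV[where g=fst])
       (use theta_over_sin_has_real_derivative assms in \<open>auto intro: derivative_intros\<close>)
  have C: "((\<lambda>z. chord_sq (fst z) (snd z)) has_derivative
      (\<lambda>h. sqrt v * sin (d/2) * fst h + (1 - cos (d/2) / sqrt v) * snd h)) (at (d, v))"
    unfolding chord_sq_def
    apply (rule has_derivative_eq_rhs)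
     apply (rule derivative_intros | simp add: assms(1))+
    using assms(1) by (simp add: fun_eq_iff field_simps)
  have "((\<lambda>z. theta_over_sin (fst z) * sqrt (chord_sq (fst z) (snd z))) has_derivative
      (\<lambda>h. theta_over_sin d * ((sqrt v * sin (d/2) * fst h + (1 - cos (d/2) / sqrt v) * snd h)
         * (inverse (sqrt (chord_sq d v)) / 2)) + fst h * fQ d * sqrt (chord_sq d v))) (at (d, v))"
    using has_derivative_mult[OF T has_derivative_real_sqrt[OF _ C]] assms(4) by simp
  moreover have "(\<lambda>h. a * ((b * fst h + c * snd h) * (inverse r / 2)) + fst h * q * r)
      = (\<lambda>h. (q * r + a * b / (2 * r)) * fst h + a * c / (2 * r) * snd h)"
    if "r > 0" for a b c q r :: real
    using that by (simp add: fun_eq_iff field_simps)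
  ultimately show ?thesis using assms(4) by (simp add: calib_ddelta_def calib_dv_def)
qed

definition calib_grad :: "real \<Rightarrow> real \<Rightarrow> real \<times> real" where
  "calib_grad d v = (calib_ddelta d v / fH_ddelta v d,
                     calib_dv d v - calib_ddelta d v * fH_dv v d / fH_ddelta v d)"

lemma calibration_has_derivative:
  assumes "snd p > 0" "chord_sq (delta_pt p) (snd p) > 0"
  shows "(calibration has_derivative (\<lambda>h. calib_grad (delta_pt p) (snd p) \<bullet> h)) (at p)"
proof -
  obtain x v where p: "p = (x, v)" by (cases p)
  define d where "d = deltaH x v"
  have v: "v > 0" and d: "-2*pi < d" "d < 2*pi" and R: "chord_sq d v > 0"
    using assms delta_pt_bounds[of p] unfolding p d_def delta_pt_def by auto
  have "fH_ddelta v d \<noteq> 0" using fH_ddelta_pos[of v d] v d by simp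
  have "calibration = (\<lambda>z. theta_over_sin (fst z) * sqrt (chord_sq (fst z) (snd z)))
      \<circ> (\<lambda>p. (delta_pt p, snd p))"
    by (simp add: fun_eq_iff calibration_def)
  moreover have "((\<lambda>z. theta_over_sin (fst z) * sqrt (chord_sq (fst z) (snd z)))
      \<circ> (\<lambda>p. (delta_pt p, snd p)) has_derivative
      (\<lambda>h. calib_ddelta d v * fst h + calib_dv d v * snd h)
      \<circ> (\<lambda>h. ((fst h - fH_dv v d * snd h) / fH_ddelta v d, snd h))) (at p)"
  proof (rule diff_chain_at)
    show "((\<lambda>p. (delta_pt p, snd p)) has_derivative
        (\<lambda>h. ((fst h - fH_dv v d * snd h) / fH_ddelta v d, snd h))) (at p)"
      unfolding p d_def by (rule delta_pt_has_derivative[OF v])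
    show "((\<lambda>z. theta_over_sin (fst z) * sqrt (chord_sq (fst z) (snd z))) has_derivative
        (\<lambda>h. calib_ddelta d v * fst h + calib_dv d v * snd h)) (at (delta_pt p, snd p))"
      using calib_pair_has_derivative[OF v d R] unfolding p d_def delta_pt_def by simp
  qed
  moreover have "(\<lambda>h. calib_ddelta d v * fst h + calib_dv d v * snd h)
      \<circ> (\<lambda>h. ((fst h - fH_dv v d * snd h) / fH_ddelta v d, snd h)) = (\<lambda>h. calib_grad d v \<bullet> h)"
    using \<open>fH_ddelta v d \<noteq> 0\<close>
    by (simp add: fun_eq_iff calib_grad_def inner_prod_def field_simps)
  ultimately show ?thesis unfolding p d_def delta_pt_def by simp
qed

text \<open>The eikonal equation for \<open>\<delta> \<noteq> 0\<close>, written in \<open>s = sin(\<delta>/2)\<close>, \<open>c = cos(\<delta>/2)\<close>,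
  \<open>w = \<surd>v\<close>, \<open>r = \<surd>(chord_sq \<delta> v)\<close> and \<open>F = \<partial>f/\<partial>\<delta>\<close>.\<close>

lemma eikonal_identity:
  fixes d s c w r F :: real
  assumes s: "s \<noteq> 0" and w: "w > 0" and r: "r > 0" and sc: "s^2 + c^2 = 1"
    and rr: "r^2 = 1 + w^2 - 2 * w * c" and F: "F \<noteq> 0"
    and F_eq: "F = (w^2+1) * ((2 * s - d * c) / (2 * s^3)) + 2 * w * ((d * (1+c^2) - 4 * s * c) / (4 * s^3))"
  shows "w^2 * ((((2 * s - d * c) / (2 * s^2) * r + d/s * (w * s) / (2 * r)) / F)^2 +
     (d/s * (1 - c/w) / (2 * r) - ((2 * s - d * c) / (2 * s^2) * r + d/s * (w * s) / (2 * r))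
        * ((d - 2 * s * c) / (2 * s^2) + (2 * s - d * c) / (2 * s^2) / w) / F)^2) = 1"
proof -
  define E where "E = (2 * s - d * c) * (w^2+1) + (d * (1+c^2) - 4 * s * c) * w"
  define X where "X = (2 * s - d * c) * r^2 + d * w * s^2"
  define K where "K = d * (w-c) * E - X * (w * (d - 2 * s * c) + (2 * s - d * c))"
  have FE: "F = E / (2 * s^3)"
    unfolding F_eq E_def using s by (simp add: field_simps power2_eq_square power3_eq_cube)
  have E: "E \<noteq> 0" using F FE by auto
  have key: "4 * s^4 * w^2 * X^2 + K^2 = 4 * s^2 * r^2 * E^2"
    unfolding K_def X_def E_def rr using sc by algebra
  have h1: "((2 * s - d * c) / (2 * s^2) * r + d/s * (w * s) / (2 * r)) / F = X * s / (E * r)"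
    unfolding FE X_def using s w r E by (simp add: field_simps power2_eq_square power3_eq_cube)
  have h2: "d/s * (1 - c/w) / (2 * r) - ((2 * s - d * c) / (2 * s^2) * r + d/s * (w * s) / (2 * r))
        * ((d - 2 * s * c) / (2 * s^2) + (2 * s - d * c) / (2 * s^2) / w) / F = K / (2 * s * w * r * E)"
    unfolding FE X_def K_def using s w r E by (simp add: field_simps power2_eq_square power3_eq_cube)
  have "w^2 * ((X * s / (E * r))^2 + (K / (2 * s * w * r * E))^2) = (4 * s^4 * w^2 * X^2 + K^2) / (4 * s^2 * r^2 * E^2)"
    using s w r E by (simp add: field_simps power2_eq_square power4_eq_xxxx)
  also have "\<dots> = 1" using key s r E by simp
  finally show ?thesis unfolding h1 h2 .
qed

lemma calib_grad_eikonal: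
  assumes v: "v > 0" and d: "-2*pi < d" "d < 2*pi" and R: "chord_sq d v > 0"
  shows "v * (norm (calib_grad d v))^2 = 1"
proof -
  have "v * (norm (calib_grad d v))^2 = v * ((fst (calib_grad d v))^2 + (snd (calib_grad d v))^2)"
    by (cases "calib_grad d v") (simp add: norm_Pair)
  also have "\<dots> = 1"
  proof (cases "d = 0")
    case True
    define w where "w = sqrt v"
    have w: "w > 0" "v = w^2" using v unfolding w_def by auto
    have "chord_sq d v = (w - 1)^2"
      unfolding chord_sq_def True w(2) using w by (simp add: power2_eq_square algebra_simps)
    then have "w \<noteq> 1" "sqrt (chord_sq d v) = \<bar>w - 1\<bar>" using R by auto
    then have "calib_grad d v = (0, (w - 1) / (w * \<bar>w - 1\<bar>))"
      using w unfolding True calib_grad_def calib_ddelta_def calib_dv_def w_def[symmetric]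
      by (simp add: fQ_def theta_over_sin_def field_simps)
    then show ?thesis using w \<open>w \<noteq> 1\<close> by (simp add: power_divide power_mult_distrib)
  next
    case False
    have s: "sin (d/2) \<noteq> 0" using sin_half_neq_0 d False by blast
    have r: "sqrt (chord_sq d v) > 0" using R by simp
    have rr: "(sqrt (chord_sq d v))^2 = 1 + (sqrt v)^2 - 2 * sqrt v * cos (d/2)"
      using R v unfolding chord_sq_def by simp
    have F: "fH_ddelta v d \<noteq> 0" using fH_ddelta_pos[of v d] v d by simp
    have F_eq: "fH_ddelta v d = ((sqrt v)^2 + 1) * ((2 * sin (d/2) - d * cos (d/2)) / (2 * (sin (d/2))^3))
        + 2 * sqrt v * ((d * (1 + (cos (d/2))^2) - 4 * sin (d/2) * cos (d/2)) / (4 * (sin (d/2))^3))"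
      unfolding fH_ddelta_def fP'_def fQ'_def using False v by simp
    show ?thesis
      using eikonal_identity[OF s _ r sin_cos_squared_add rr F F_eq] False v
      unfolding calib_grad_def calib_ddelta_def calib_dv_def fH_dv_def fQ_def theta_over_sin_def fP_def
      by simp
  qed
  finally show ?thesis .
qed

lemma calib_grad_inner_le:
  assumes "v > 0" "-2*pi < d" "d < 2*pi" "chord_sq d v > 0"
  shows "calib_grad d v \<bullet> h \<le> norm h / sqrt v"
proof -
  have "(norm (calib_grad d v))^2 = 1 / v"
    using calib_grad_eikonal[OF assms] assms(1) by (simp add: field_simps)
  then have "norm (calib_grad d v) = sqrt (1 / v)" by (simp add: real_sqrt_unique)
  then show ?thesis using norm_cauchy_schwarz[of "calib_grad d v" h] by (simp add: real_sqrt_divide)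
qed

section \<open>Lengths of admissible curves\<close>

lemma calibration_along_curve:
  assumes "(\<gamma> has_vector_derivative D) (at t)" "snd (\<gamma> t) > 0" "\<gamma> t \<noteq> (0, 1)"
  shows "((\<lambda>t. calibration (\<gamma> t)) has_real_derivative
           calib_grad (delta_pt (\<gamma> t)) (snd (\<gamma> t)) \<bullet> D) (at t)"
proof -
  have "chord_sq (delta_pt (\<gamma> t)) (snd (\<gamma> t)) > 0" using chord_sq_pos assms(2,3) by simp
  then have "((calibration \<circ> \<gamma>) has_derivative
      (\<lambda>h. calib_grad (delta_pt (\<gamma> t)) (snd (\<gamma> t)) \<bullet> h) \<circ> (\<lambda>h. h *\<^sub>R D)) (at t)"
    using assms(1,2) unfolding has_vector_derivative_def
    by (intro diff_chain_at calibration_has_derivative)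
  then show ?thesis
    unfolding has_field_derivative_def o_def by (rule has_derivative_eq_rhs) (simp add: fun_eq_iff)
qed

lemma obtain_last_visit:
  fixes \<gamma> :: "real \<Rightarrow> 'a::t1_space"
  assumes "continuous_on {a..b} \<gamma>" "\<gamma> a = p" "\<gamma> b \<noteq> p" "a \<le> b"
  obtains t0 where "a \<le> t0" "t0 < b" "\<gamma> t0 = p" "\<And>t. t0 < t \<Longrightarrow> t \<le> b \<Longrightarrow> \<gamma> t \<noteq> p"
proof -
  define T where "T = {t \<in> {a..b}. \<gamma> t = p}"
  have "closed T" unfolding T_def by (rule continuous_closed_preimage_constant[OF assms(1)]) simp
  moreover have "a \<in> T" "bdd_above T" using assms(2,4) unfolding T_def by (auto intro: bdd_aboveI[of _ b])
  ultimately have "Sup T \<in> T" "a \<le> Sup T" by (auto intro: closed_contains_Sup cSup_upper)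
  moreover have "\<gamma> t \<noteq> p" if "Sup T < t" "t \<le> b" for t
    using that cSup_upper[OF _ \<open>bdd_above T\<close>, of t] \<open>a \<le> Sup T\<close> unfolding T_def by force
  ultimately show ?thesis using that assms(3) unfolding T_def by force
qed

lemma diff_le_integral_of_deriv_le:
  fixes g g' l :: "real \<Rightarrow> real"
  assumes "a \<le> b" "finite S" "continuous_on {a..b} g"
    and "\<And>t. t \<in> {a<..<b} - S \<Longrightarrow> (g has_real_derivative g' t) (at t)"
    and "\<And>t. t \<in> {a<..<b} - S \<Longrightarrow> g' t \<le> l t"
    and "l integrable_on {a..b}"
  shows "g b - g a \<le> integral {a..b} l"
proof -
  have "(g' has_integral (g b - g a)) {a..b}"
    using assms(1-4)
    by (intro fundamental_theorem_of_calculus_interior_strong)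
       (auto simp: has_real_derivative_iff_has_vector_derivative)
  then have "((\<lambda>t. if t \<in> {a<..<b} - S then g' t else l t) has_integral (g b - g a)) {a..b}"
    by (rule has_integral_spike_finite[of "S \<union> {a, b}", rotated 2]) (use assms(2) in auto)
  then show ?thesis
    by (rule has_integral_le[OF _ integrable_integral[OF assms(6)]]) (use assms(5) in auto)
qed

definition curve_lengths :: "real \<times> real \<Rightarrow> real \<times> real \<Rightarrow> real set" where
  "curve_lengths p q = {L. \<exists>\<gamma>::real \<Rightarrow> real \<times> real.
      \<gamma> piecewise_C1_differentiable_on {0..1} \<and> \<gamma> 0 = p \<and> \<gamma> 1 = q \<and>
      (\<forall>t\<in>{0<..<1}. snd (\<gamma> t) > 0) \<and>
      ((\<lambda>t. norm (vector_derivative \<gamma> (at t)) / sqrt (snd (\<gamma> t))) has_integral L) {0..1}}"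

lemma hyp_dist_eq_Inf_curve_lengths: "hyp_dist p q = Inf (curve_lengths p q)"
  unfolding hyp_dist_def curve_lengths_def ..

lemma calibration_le_curve_length:
  assumes "L \<in> curve_lengths (0, 1) q" "snd q \<ge> 0"
  shows "calibration q \<le> L"
proof -
  obtain \<gamma> where pc: "\<gamma> piecewise_C1_differentiable_on {0..1}" and ends: "\<gamma> 0 = (0, 1)" "\<gamma> 1 = q"
    and pos: "\<forall>t\<in>{0<..<1}. snd (\<gamma> t) > 0"
    and len: "((\<lambda>t. norm (vector_derivative \<gamma> (at t)) / sqrt (snd (\<gamma> t))) has_integral L) {0..1}"
    using assms(1) unfolding curve_lengths_def by blast
  let ?l = "\<lambda>t. norm (vector_derivative \<gamma> (at t)) / sqrt (snd (\<gamma> t))"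
  have in_H: "snd (\<gamma> t) \<ge> 0" if "t \<in> {0..1}" for t
    using that ends assms(2) pos by (cases "t = 0 \<or> t = 1") (auto simp: less_imp_le)
  then have l_nonneg: "0 \<le> ?l t" if "t \<in> {0..1}" for t using that by simp
  show ?thesis
  proof (cases "q = (0, 1)")
    case True
    then show ?thesis using calibration_origin has_integral_nonneg[OF len l_nonneg] by simp
  next
    case False
    have cont: "continuous_on {0..1} \<gamma>"
      using pc unfolding piecewise_C1_differentiable_on_def by blast
    obtain S Dg where S: "finite S"
      and Dg: "\<And>t. t \<in> {0..1} - S \<Longrightarrow> (\<gamma> has_vector_derivative Dg t) (at t)"
      using pc unfolding piecewise_C1_differentiable_on_def C1_differentiable_on_def by blast
    txt \<open>The calibration is differentiable only away from \<open>(0, 1)\<close>, so integrate from the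
      last visit of the curve to \<open>(0, 1)\<close>.\<close>
    obtain t0 where t0: "0 \<le> t0" "t0 < 1" "\<gamma> t0 = (0, 1)"
      and away: "\<And>t. t0 < t \<Longrightarrow> t \<le> 1 \<Longrightarrow> \<gamma> t \<noteq> (0, 1)"
      using obtain_last_visit[OF cont ends(1)] ends(2) False by auto
    have "calibration (\<gamma> 1) - calibration (\<gamma> t0) \<le> integral {t0..1} ?l"
    proof (rule diff_le_integral_of_deriv_le[OF _ S])
      show "continuous_on {t0..1} (\<lambda>t. calibration (\<gamma> t))"
        by (rule continuous_on_compose2[OF continuous_on_calibration continuous_on_subset[OF cont]])
           (use in_H t0 in auto)
      fix t assume t: "t \<in> {t0<..<1} - S"
      then have v: "snd (\<gamma> t) > 0" and d: "\<gamma> t \<noteq> (0, 1)" and Dt: "t \<in> {0..1} - S"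
        using pos t0 away by auto
      show "((\<lambda>t. calibration (\<gamma> t)) has_real_derivative
          calib_grad (delta_pt (\<gamma> t)) (snd (\<gamma> t)) \<bullet> Dg t) (at t)"
        by (rule calibration_along_curve[OF Dg[OF Dt] v d])
      show "calib_grad (delta_pt (\<gamma> t)) (snd (\<gamma> t)) \<bullet> Dg t \<le> ?l t"
        using calib_grad_inner_le[OF v delta_pt_bounds chord_sq_pos] v d
          vector_derivative_at[OF Dg[OF Dt]] by simp
    next
      show "?l integrable_on {t0..1}"
        by (rule integrable_subinterval_real[OF has_integral_integrable[OF len]]) (use t0 in auto)
    qed (use t0 in auto)
    also have "\<dots> \<le> integral {0..1} ?l"
      using t0 l_nonneg len by (intro integral_subset_le) (auto simp: has_integral_integrable
          intro: integrable_subinterval_real[OF has_integral_integrable[OF len]])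
    also have "\<dots> = L" using len by (simp add: integral_unique)
    finally show ?thesis using ends t0 calibration_origin by simp
  qed
qed

section \<open>The bound on \<open>\<Gamma>\<^sub>\<theta>\<close> and minimising curves\<close>

definition Dhat_value :: "real \<Rightarrow> real" where
  "Dhat_value \<theta> = (if \<bar>\<theta>\<bar> < pi then \<bar>\<theta>\<bar> else \<theta> / sin (\<theta>/2))"

lemma Dhat_value_le_calibration:
  assumes "q \<in> GammaH \<theta>"
  shows "Dhat_value \<theta> \<le> calibration q"
proof -
  have v: "snd q \<ge> 0" and d: "delta_pt q = \<theta>"
    using assms unfolding GammaH_def delta_pt_def by auto
  have rng: "-2*pi < \<theta>" "\<theta> < 2*pi" using delta_pt_bounds[OF v] d by auto
  have h: "theta_over_sin \<theta> > 0" by (rule theta_over_sin_pos[OF rng])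
  have G: "calibration q = theta_over_sin \<theta> * sqrt (chord_sq \<theta> (snd q))"
    unfolding calibration_def d ..
  show ?thesis
  proof (cases "\<bar>\<theta>\<bar> < pi")
    case True
    have "\<bar>sin (\<theta>/2)\<bar> \<le> sqrt (chord_sq \<theta> (snd q))"
      unfolding chord_sq_eq[OF v] by (rule real_le_rsqrt) simp
    then have "theta_over_sin \<theta> * \<bar>sin (\<theta>/2)\<bar> \<le> calibration q"
      unfolding G using h by simp
    moreover have "theta_over_sin \<theta> * \<bar>sin (\<theta>/2)\<bar> = \<bar>\<theta>\<bar>"
    proof -
      have "theta_over_sin \<theta> * sin (\<theta>/2) = \<theta>"
        using sin_half_neq_0[OF rng] by (simp add: theta_over_sin_def)
      then show ?thesis using h by (metis abs_mult abs_of_pos)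
    qed
    ultimately show ?thesis using True by (simp add: Dhat_value_def)
  next
    case False
    have "cos (\<theta>/2) = cos (\<bar>\<theta>\<bar>/2)" by (cases "\<theta> \<ge> 0") simp_all
    also have "\<dots> \<le> cos (pi/2)" using False rng by (subst cos_mono_le_eq) auto
    finally have "sqrt (snd q) * cos (\<theta>/2) \<le> 0" using v by (simp add: mult_nonneg_nonpos)
    then have "1 \<le> sqrt (chord_sq \<theta> (snd q))" unfolding chord_sq_def using v by simp
    then have "theta_over_sin \<theta> \<le> calibration q" unfolding G using h by simp
    moreover have "\<theta> \<noteq> 0" using False by auto
    ultimately show ?thesis using False by (simp add: Dhat_value_def theta_over_sin_def)
  qed
qed

lemma constant_speed_mem_curve_lengths:
  fixes X V X' V' :: "real \<Rightarrow> real"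
  assumes "\<And>t. (X has_real_derivative X' t) (at t)" "\<And>t. (V has_real_derivative V' t) (at t)"
    and "continuous_on {0..1} X'" "continuous_on {0..1} V'"
    and "\<And>t. t \<in> {0<..<1} \<Longrightarrow> V t > 0"
    and "\<And>t. t \<in> {0<..<1} \<Longrightarrow> (X' t)^2 + (V' t)^2 = c^2 * V t" "c \<ge> 0"
  shows "c \<in> curve_lengths (X 0, V 0) (X 1, V 1)"
proof -
  define \<gamma> where "\<gamma> t = (X t, V t)" for t
  have D: "(\<gamma> has_vector_derivative (X' t, V' t)) (at t)" for t
    unfolding \<gamma>_def using assms(1,2)
    by (intro has_vector_derivative_Pair) (auto simp: has_real_derivative_iff_has_vector_derivative)
  have "\<gamma> C1_differentiable_on {0..1}"
    unfolding C1_differentiable_on_def using D assms(3,4)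
    by (intro exI[of _ "\<lambda>t. (X' t, V' t)"] conjI ballI continuous_on_Pair) auto
  moreover have "norm (vector_derivative \<gamma> (at t)) / sqrt (snd (\<gamma> t)) = c" if "t \<in> {0<..<1}" for t
  proof -
    have "norm (vector_derivative \<gamma> (at t)) = sqrt (c^2 * V t)"
      using vector_derivative_at[OF D] assms(6)[OF that] by (simp add: norm_Pair)
    then show ?thesis using assms(5)[OF that] assms(7) by (simp add: \<gamma>_def real_sqrt_mult)
  qed
  then have "((\<lambda>t. norm (vector_derivative \<gamma> (at t)) / sqrt (snd (\<gamma> t))) has_integral c) {0..1}"
    by (intro has_integral_spike_finite[of "{0, 1}", OF _ _ has_integral_const_real[of c 0 1, simplified]])
       auto
  ultimately show ?thesis
    unfolding curve_lengths_def using assms(5)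
    by (intro CollectI exI[of _ \<gamma>]) (auto simp: \<gamma>_def C1_differentiable_imp_piecewise)
qed

lemma curve_lengths_nonempty:
  assumes "v \<ge> 0"
  shows "curve_lengths (0, 1) (x, v) \<noteq> {}"
proof -
  define w where "w = sqrt v"
  define K where "K = 2 * x / (1 + w)"
  have w: "w \<ge> 0" "w^2 = v" using assms unfolding w_def by auto
  define X where "X t = K * (t - t^2/2 + w * t^2/2)" for t
  define V where "V t = (1 - t + t * w)^2" for t
  define c where "c = K^2 + 4 * (w - 1)^2"
  have "c \<ge> 0" unfolding c_def by simp
  have "sqrt c \<in> curve_lengths (X 0, V 0) (X 1, V 1)"
  proof (rule constant_speed_mem_curve_lengths)
    show "(X has_real_derivative K * (1 - t + t * w)) (at t)" for t
      unfolding X_def by (rule derivative_eq_intros refl | simp add: algebra_simps)+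
    show "(V has_real_derivative 2 * (1 - t + t * w) * (w - 1)) (at t)" for t
      unfolding V_def by (rule derivative_eq_intros refl | simp add: algebra_simps)+
    show "continuous_on {0..1} (\<lambda>t. K * (1 - t + t * w))"
      "continuous_on {0..1} (\<lambda>t. 2 * (1 - t + t * w) * (w - 1))"
      by (intro continuous_intros)+
    show "sqrt c \<ge> 0" using \<open>c \<ge> 0\<close> by simp
    fix t :: real assume "t \<in> {0<..<1}"
    moreover have "t * w \<ge> 0" using calculation w by simp
    ultimately have "1 - t + t * w > 0" by simp
    then show "V t > 0" unfolding V_def by simp
    show "(K * (1 - t + t * w))^2 + (2 * (1 - t + t * w) * (w - 1))^2
        = (sqrt c)^2 * V t"
      unfolding V_def real_sqrt_pow2[OF \<open>c \<ge> 0\<close>] unfolding c_def by algebra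
  qed
  moreover have "(X 0, V 0) = (0, 1)" "(X 1, V 1) = (x, v)"
    using w unfolding X_def V_def K_def by (auto simp: field_simps)
  ultimately show ?thesis by auto
qed

lemma abs_mem_curve_lengths:
  assumes "\<bar>\<theta>\<bar> < pi"
  shows "\<bar>\<theta>\<bar> \<in> curve_lengths (0, 1) ((\<theta> + sin \<theta>) / 2, (cos (\<theta>/2))^2)"
proof -
  define X where "X t = (t * \<theta> + sin (t * \<theta>)) / 2" for t
  define V where "V t = (cos (t * \<theta> / 2))^2" for t
  have "\<bar>\<theta>\<bar> \<in> curve_lengths (X 0, V 0) (X 1, V 1)"
  proof (rule constant_speed_mem_curve_lengths)
    show "(X has_real_derivative \<theta> * (cos (t * \<theta> / 2))^2) (at t)" for t
    proof -
      have "cos (t * \<theta>) = 2 * (cos (t * \<theta> / 2))^2 - 1"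
        using cos_double_cos[of "t * \<theta> / 2"] by simp
      then have eq: "(\<theta> + \<theta> * cos (t * \<theta>)) / 2 = \<theta> * (cos (t * \<theta> / 2))^2" by algebra
      have "(X has_real_derivative (\<theta> + \<theta> * cos (t * \<theta>)) / 2) (at t)"
        unfolding X_def by (rule derivative_eq_intros refl | simp add: algebra_simps)+
      then show ?thesis using eq by (rule DERIV_cong)
    qed
    show "(V has_real_derivative - \<theta> * cos (t * \<theta> / 2) * sin (t * \<theta> / 2)) (at t)" for t
      unfolding V_def by (rule derivative_eq_intros refl | simp add: algebra_simps)+
    show "continuous_on {0..1} (\<lambda>t. \<theta> * (cos (t * \<theta> / 2))^2)"
      "continuous_on {0..1} (\<lambda>t. - \<theta> * cos (t * \<theta> / 2) * sin (t * \<theta> / 2))"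
      by (intro continuous_intros | simp)+
    show "\<bar>\<theta>\<bar> \<ge> 0" by simp
    fix t :: real assume t: "t \<in> {0<..<1}"
    then have "t * \<bar>\<theta>\<bar> \<le> \<bar>\<theta>\<bar>" by (simp add: mult_left_le_one_le)
    then have "\<bar>t * \<theta> / 2\<bar> < pi/2" using assms t by (simp add: abs_mult)
    then have "cos (t * \<theta> / 2) > 0" by (intro cos_gt_zero_pi) (auto simp: abs_less_iff)
    then show "V t > 0" unfolding V_def by simp
    show "(\<theta> * (cos (t * \<theta> / 2))^2)^2 + (- \<theta> * cos (t * \<theta> / 2) * sin (t * \<theta> / 2))^2
        = \<bar>\<theta>\<bar>^2 * V t"
      unfolding V_def power2_abs using sin_cos_squared_add[of "t * \<theta> / 2"] by algebra
  qed
  moreover have "(X 0, V 0) = (0, 1)" "(X 1, V 1) = ((\<theta> + sin \<theta>) / 2, (cos (\<theta>/2))^2)"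
    unfolding X_def V_def by simp_all
  ultimately show ?thesis by simp
qed

lemma theta_over_sin_mem_curve_lengths:
  assumes "pi \<le> \<bar>\<theta>\<bar>" "\<bar>\<theta>\<bar> < 2*pi"
  shows "\<theta> / sin (\<theta>/2) \<in> curve_lengths (0, 1) ((\<theta> - sin \<theta>) / (1 - cos \<theta>), 0)"
proof -
  define \<sigma> where "\<sigma> = sin (\<theta>/2)"
  define m where "m = 1 / \<sigma>^2"
  have rng: "-2*pi < \<theta>" "\<theta> < 2*pi" "\<theta> \<noteq> 0" using assms pi_gt_zero by auto
  have \<sigma>: "\<sigma> \<noteq> 0" unfolding \<sigma>_def using sin_half_neq_0 rng by blast
  have "\<theta> / \<sigma> > 0"
    using theta_over_sin_pos[OF rng(1,2)] rng(3) unfolding \<sigma>_def by (simp add: theta_over_sin_def)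
  define S C where "S t = sin (\<theta> * (1 - t) / 2)" and "C t = cos (\<theta> * (1 - t) / 2)" for t
  define X where "X t = m / 2 * (\<theta> * t + sin (\<theta> * (1 - t)) - sin \<theta>)" for t
  define V where "V t = m * (S t)^2" for t
  have "\<theta> / \<sigma> \<in> curve_lengths (X 0, V 0) (X 1, V 1)"
  proof (rule constant_speed_mem_curve_lengths)
    show "(X has_real_derivative \<theta> * m * (S t)^2) (at t)" for t
    proof -
      have "(X has_real_derivative m / 2 * (\<theta> - \<theta> * cos (\<theta> * (1 - t)))) (at t)"
        unfolding X_def by (rule derivative_eq_intros refl | simp add: algebra_simps)+
      moreover have "m / 2 * (\<theta> - \<theta> * cos (\<theta> * (1 - t))) = \<theta> * m * (S t)^2"
        unfolding S_def cos_eq_double_half[of "\<theta> * (1 - t)"] by (simp add: algebra_simps)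
      ultimately show ?thesis by (rule DERIV_cong)
    qed
    show "(V has_real_derivative - \<theta> * m * S t * C t) (at t)" for t
      unfolding V_def S_def C_def by (rule derivative_eq_intros refl | simp add: algebra_simps)+
    show "continuous_on {0..1} (\<lambda>t. \<theta> * m * (S t)^2)"
      "continuous_on {0..1} (\<lambda>t. - \<theta> * m * S t * C t)"
      unfolding S_def C_def by (intro continuous_intros; simp)+
    show "\<theta> / \<sigma> \<ge> 0" using \<open>\<theta> / \<sigma> > 0\<close> by simp
    fix t :: real assume t: "t \<in> {0<..<1}"
    have "S t \<noteq> 0"
    proof
      assume "S t = 0"
      have "\<bar>\<theta> * (1 - t)\<bar> \<le> \<bar>\<theta>\<bar>" using t by (simp add: abs_mult mult_left_le)
      then have "-pi < \<theta> * (1 - t) / 2" "\<theta> * (1 - t) / 2 < pi" using assms(2) by linarith+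
      then have "\<theta> * (1 - t) / 2 = 0" using \<open>S t = 0\<close> unfolding S_def by (rule sin_eq_0_pi)
      then show False using t rng(3) by simp
    qed
    then show "V t > 0" unfolding V_def m_def using \<sigma> by simp
    have "(\<theta> / \<sigma>)^2 = \<theta>^2 * m" unfolding m_def by (simp add: power_divide)
    moreover have "(S t)^2 + (C t)^2 = 1" unfolding S_def C_def by simp
    ultimately show "(\<theta> * m * (S t)^2)^2 + (- \<theta> * m * S t * C t)^2 = (\<theta> / \<sigma>)^2 * V t"
      unfolding V_def by algebra
  qed
  moreover have "(X 0, V 0) = (0, 1)" "(X 1, V 1) = ((\<theta> - sin \<theta>) / (1 - cos \<theta>), 0)"
    using \<sigma> unfolding X_def V_def S_def m_def \<sigma>_def
    by (simp_all add: cos_eq_double_half[of \<theta>])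
  ultimately show ?thesis unfolding \<sigma>_def by simp
qed

lemma Dhat_eq_hyp_dist:
  assumes P: "P \<in> GammaH \<theta>" and len: "Dhat_value \<theta> \<in> curve_lengths (0, 1) P"
  shows "Dhat \<theta> = Dhat_value \<theta> \<and> hyp_dist (0, 1) P = Dhat_value \<theta>"
proof -
  have lower: "Dhat_value \<theta> \<le> L" if "q \<in> GammaH \<theta>" "L \<in> curve_lengths (0, 1) q" for q L
    using Dhat_value_le_calibration[OF that(1)] calibration_le_curve_length[OF that(2)] that(1)
    unfolding GammaH_def by fastforce
  have dist_P: "hyp_dist (0, 1) P = Dhat_value \<theta>"
    unfolding hyp_dist_eq_Inf_curve_lengths by (rule cInf_eq_minimum[OF len lower[OF P]])
  have "Dhat_value \<theta> \<le> hyp_dist (0, 1) q" if q: "q \<in> GammaH \<theta>" for q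
    unfolding hyp_dist_eq_Inf_curve_lengths
    using curve_lengths_nonempty[of "snd q" "fst q"] lower[OF q] q
    by (intro cInf_greatest) (auto simp: GammaH_def)
  then have "Dhat \<theta> = Dhat_value \<theta>"
    unfolding Dhat_def using P dist_P by (intro cInf_eq_minimum) force+
  with dist_P show ?thesis by simp
qed

lemma small_point_mem_GammaH:
  assumes "\<bar>\<theta>\<bar> < pi"
  shows "((\<theta> + sin \<theta>) / 2, (cos (\<theta>/2))^2) \<in> GammaH \<theta>"
proof -
  have "fH ((cos (\<theta>/2))^2) \<theta> = (\<theta> + sin \<theta>) / 2"
  proof (cases "\<theta> = 0")
    case False
    have c: "cos (\<theta>/2) > 0" using assms by (intro cos_gt_zero_pi) auto
    have s: "sin (\<theta>/2) \<noteq> 0" using sin_half_neq_0 assms False by auto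
    have "fH ((cos (\<theta>/2))^2) \<theta> = (((cos (\<theta>/2))^2 + 1) * (\<theta> - 2 * sin (\<theta>/2) * cos (\<theta>/2))
        + 2 * cos (\<theta>/2) * (2 * sin (\<theta>/2) - \<theta> * cos (\<theta>/2))) / (2 * (sin (\<theta>/2))^2)"
      unfolding fH_def using False c by (simp add: sin_eq_double_half[of \<theta>])
    also have "\<dots> = (\<theta> + 2 * sin (\<theta>/2) * cos (\<theta>/2)) / 2"
      using s by (simp add: field_simps) (use sin_cos_squared_add[of "\<theta>/2"] in algebra)
    finally show ?thesis by (simp add: sin_eq_double_half[of \<theta>])
  qed (simp add: fH_def)
  then show ?thesis unfolding GammaH_def using assms by (auto intro: deltaH_eqI)
qed

lemma large_point_mem_GammaH:
  assumes "pi \<le> \<bar>\<theta>\<bar>" "\<bar>\<theta>\<bar> < 2*pi"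
  shows "((\<theta> - sin \<theta>) / (1 - cos \<theta>), 0) \<in> GammaH \<theta>"
proof -
  have "\<theta> \<noteq> 0" using assms(1) pi_gt_zero by (metis abs_zero not_le)
  then have "fH 0 \<theta> = (\<theta> - sin \<theta>) / (1 - cos \<theta>)"
    unfolding fH_def cos_eq_double_half[of \<theta>] by simp
  then show ?thesis unfolding GammaH_def using assms(2) by (auto intro: deltaH_eqI)
qed

theorem theorem2p3:
  fixes \<theta> :: real
  assumes "-2*pi < \<theta>" and "\<theta> < 2*pi"
  shows "(\<bar>\<theta>\<bar> < pi \<longrightarrow>
            Dhat \<theta> = \<bar>\<theta>\<bar> \<and>
            \<bar>\<theta>\<bar> = hyp_dist (0, 1) ((\<theta> + sin \<theta>) / 2, (cos (\<theta>/2))^2)) \<and>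
         (pi \<le> \<bar>\<theta>\<bar> \<longrightarrow>
            Dhat \<theta> = \<theta> / sin (\<theta>/2) \<and>
            \<theta> / sin (\<theta>/2) = hyp_dist (0, 1) ((\<theta> - sin \<theta>) / (1 - cos \<theta>), 0))"
proof (intro conjI impI)
  assume small: "\<bar>\<theta>\<bar> < pi"
  then have "Dhat_value \<theta> = \<bar>\<theta>\<bar>" by (simp add: Dhat_value_def)
  with Dhat_eq_hyp_dist[OF small_point_mem_GammaH[OF small]] abs_mem_curve_lengths[OF small]
  show "Dhat \<theta> = \<bar>\<theta>\<bar>" "\<bar>\<theta>\<bar> = hyp_dist (0, 1) ((\<theta> + sin \<theta>) / 2, (cos (\<theta>/2))^2)"
    by auto
next
  assume large: "pi \<le> \<bar>\<theta>\<bar>"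
  have "\<bar>\<theta>\<bar> < 2*pi" using assms by auto
  moreover have "Dhat_value \<theta> = \<theta> / sin (\<theta>/2)" using large by (simp add: Dhat_value_def)
  ultimately show "Dhat \<theta> = \<theta> / sin (\<theta>/2)"
      "\<theta> / sin (\<theta>/2) = hyp_dist (0, 1) ((\<theta> - sin \<theta>) / (1 - cos \<theta>), 0)"
    using Dhat_eq_hyp_dist[OF large_point_mem_GammaH[OF large]]
      theta_over_sin_mem_curve_lengths[OF large] by auto
qed

end
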